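(* Let $\mathcal{V}$ and $\mathcal{W}$ be quaternionic two-sided Banach algebras with unit and let $\mathcal{A}:\mathcal{V}\to\mathcal{W}$ be a continuous isomorphism. Then for all $v\in\mathcal{V}$, $$B_{S,\partial}(v)=B_{S,\partial}(\mathcal{A}(v))=\bigcup_{c\in\mathcal{A}^{-1}(0)}B_{S,\partial}(v+c).$$
   Context: $\mathbb{H}$ denotes the quaternions, $Re(q)$ the real part and $|q|$ the norm of $q$. A quaternionic two-sided Banach algebra with unit is a two-sided $\mathbb{H}$-vector space with an associative product satisfying $x(y+z)=xy+xz$, $(x+y)z=xz+yz$, $q(xy)=(qx)y$, $(xy)q=x(yq)$, complete for a norm with $\|qx\|=|q|\|x\|=\|xq\|$, $\|xy\|\le\|x\|\|y\|$, and with unit $1\ne0$ of norm $1$. A homomorphism is additive, multiplicative, $\mathbb{H}$-linear on both sides and unital; an isomorphism is a bijective homomorphism. For an element $v$ of such an algebra $\mathcal{V}$, $R_q(v)=v^2-2Re(q)v+|q|^21_{\mathcal{V}}$ and $B_{S,\partial}(v)=\{q\in\mathbb{H}: R_q(v)\in\partial(\mathcal{V}\setminus\mathcal{V}^{-1})\}$, where $\mathcal{V}^{-1}$ is the set of invertible elements and $\partial$ denotes topological boundary in $\mathcal{V}$ (and analogously in $\mathcal{W}$). *)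

theory Defs
  imports Main "HOL.Real" "HOL.NthRoot"
begin

datatype quat = Quat (qRe: real) (qIm1: real) (qIm2: real) (qIm3: real)

definition qadd :: "quat \<Rightarrow> quat \<Rightarrow> quat" where
  "qadd p q = Quat (qRe p + qRe q) (qIm1 p + qIm1 q) (qIm2 p + qIm2 q) (qIm3 p + qIm3 q)"

definition qmul :: "quat \<Rightarrow> quat \<Rightarrow> quat" where
  "qmul p q = Quat
     (qRe p * qRe q - qIm1 p * qIm1 q - qIm2 p * qIm2 q - qIm3 p * qIm3 q)
     (qRe p * qIm1 q + qIm1 p * qRe q + qIm2 p * qIm3 q - qIm3 p * qIm2 q)
     (qRe p * qIm2 q - qIm1 p * qIm3 q + qIm2 p * qRe q + qIm3 p * qIm1 q)
     (qRe p * qIm3 q + qIm1 p * qIm2 q - qIm2 p * qIm1 q + qIm3 p * qRe q)"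

definition qone :: quat where "qone = Quat 1 0 0 0"

definition qof_real :: "real \<Rightarrow> quat" where "qof_real r = Quat r 0 0 0"

definition qnorm :: "quat \<Rightarrow> real" where
  "qnorm q = sqrt ((qRe q)\<^sup>2 + (qIm1 q)\<^sup>2 + (qIm2 q)\<^sup>2 + (qIm3 q)\<^sup>2)"

record 'a qalg =
  add  :: "'a \<Rightarrow> 'a \<Rightarrow> 'a"
  zero :: 'a
  neg  :: "'a \<Rightarrow> 'a"
  mul  :: "'a \<Rightarrow> 'a \<Rightarrow> 'a"
  one  :: 'a
  lsc  :: "quat \<Rightarrow> 'a \<Rightarrow> 'a"   \<comment> \<open>lsc q x = q x\<close>
  rsc  :: "quat \<Rightarrow> 'a \<Rightarrow> 'a"   \<comment> \<open>rsc q x = x q\<close>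
  nrm  :: "'a \<Rightarrow> real"

definition qdist :: "'a qalg \<Rightarrow> 'a \<Rightarrow> 'a \<Rightarrow> real" where
  "qdist A x y = nrm A (add A x (neg A y))"

definition qbanach_alg :: "'a qalg \<Rightarrow> bool" where
  "qbanach_alg A \<longleftrightarrow>
     \<comment> \<open>abelian group\<close>
     (\<forall>x y z. add A (add A x y) z = add A x (add A y z)) \<and>
     (\<forall>x y. add A x y = add A y x) \<and>
     (\<forall>x. add A x (zero A) = x) \<and>
     (\<forall>x. add A x (neg A x) = zero A) \<and>
     \<comment> \<open>left H-vector space\<close>
     (\<forall>p q x. lsc A (qadd p q) x = add A (lsc A p x) (lsc A q x)) \<and>
     (\<forall>q x y. lsc A q (add A x y) = add A (lsc A q x) (lsc A q y)) \<and>
     (\<forall>p q x. lsc A (qmul p q) x = lsc A p (lsc A q x)) \<and>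
     (\<forall>x. lsc A qone x = x) \<and>
     \<comment> \<open>right H-vector space\<close>
     (\<forall>p q x. rsc A (qadd p q) x = add A (rsc A p x) (rsc A q x)) \<and>
     (\<forall>q x y. rsc A q (add A x y) = add A (rsc A q x) (rsc A q y)) \<and>
     (\<forall>p q x. rsc A (qmul p q) x = rsc A q (rsc A p x)) \<and>
     (\<forall>x. rsc A qone x = x) \<and>
     \<comment> \<open>two-sided: (q x) p = q (x p)\<close>
     (\<forall>p q x. rsc A p (lsc A q x) = lsc A q (rsc A p x)) \<and>
     \<comment> \<open>associative product, distributive\<close>
     (\<forall>x y z. mul A (mul A x y) z = mul A x (mul A y z)) \<and>
     (\<forall>x y z. mul A x (add A y z) = add A (mul A x y) (mul A x z)) \<and>
     (\<forall>x y z. mul A (add A x y) z = add A (mul A x z) (mul A y z)) \<and>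
     (\<forall>q x y. lsc A q (mul A x y) = mul A (lsc A q x) y) \<and>
     (\<forall>q x y. rsc A q (mul A x y) = mul A x (rsc A q y)) \<and>
     \<comment> \<open>unit\<close>
     (\<forall>x. mul A (one A) x = x \<and> mul A x (one A) = x) \<and>
     one A \<noteq> zero A \<and>
     \<comment> \<open>norm\<close>
     (\<forall>x. nrm A x = 0 \<longleftrightarrow> x = zero A) \<and>
     (\<forall>x y. nrm A (add A x y) \<le> nrm A x + nrm A y) \<and>
     (\<forall>q x. nrm A (lsc A q x) = qnorm q * nrm A x) \<and>
     (\<forall>q x. nrm A (rsc A q x) = qnorm q * nrm A x) \<and>
     (\<forall>x y. nrm A (mul A x y) \<le> nrm A x * nrm A y) \<and>
     nrm A (one A) = 1 \<and>
     \<comment> \<open>completeness\<close>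
     (\<forall>s :: nat \<Rightarrow> 'a.
        (\<forall>e>0. \<exists>N. \<forall>m\<ge>N. \<forall>n\<ge>N. qdist A (s m) (s n) < e) \<longrightarrow>
        (\<exists>l. \<forall>e>0. \<exists>N. \<forall>n\<ge>N. qdist A (s n) l < e))"

definition qinvertibles :: "'a qalg \<Rightarrow> 'a set" where
  "qinvertibles A = {x. \<exists>y. mul A x y = one A \<and> mul A y x = one A}"

definition qboundary :: "'a qalg \<Rightarrow> 'a set \<Rightarrow> 'a set" where
  "qboundary A S = {x. \<forall>e>0. (\<exists>y\<in>S. qdist A y x < e) \<and> (\<exists>y. y \<notin> S \<and> qdist A y x < e)}"

definition qRq :: "'a qalg \<Rightarrow> quat \<Rightarrow> 'a \<Rightarrow> 'a" where
  "qRq A q v = add A (add A (mul A v v) (neg A (lsc A (qof_real (2 * qRe q)) v)))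
                     (lsc A (qof_real ((qnorm q)\<^sup>2)) (one A))"

definition BSd :: "'a qalg \<Rightarrow> 'a \<Rightarrow> quat set" where
  "BSd A v = {q. qRq A q v \<in> qboundary A (UNIV - qinvertibles A)}"

definition qhom :: "'a qalg \<Rightarrow> 'b qalg \<Rightarrow> ('a \<Rightarrow> 'b) \<Rightarrow> bool" where
  "qhom V W f \<longleftrightarrow>
     (\<forall>x y. f (add V x y) = add W (f x) (f y)) \<and>
     (\<forall>x y. f (mul V x y) = mul W (f x) (f y)) \<and>
     (\<forall>q x. f (lsc V q x) = lsc W q (f x)) \<and>
     (\<forall>q x. f (rsc V q x) = rsc W q (f x)) \<and>
     f (one V) = one W"

definition qiso :: "'a qalg \<Rightarrow> 'b qalg \<Rightarrow> ('a \<Rightarrow> 'b) \<Rightarrow> bool" where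
  "qiso V W f \<longleftrightarrow> qhom V W f \<and> bij f"

definition qcontinuous :: "'a qalg \<Rightarrow> 'b qalg \<Rightarrow> ('a \<Rightarrow> 'b) \<Rightarrow> bool" where
  "qcontinuous V W f \<longleftrightarrow>
     (\<forall>x. \<forall>e>0. \<exists>d>0. \<forall>y. qdist V y x < d \<longrightarrow> qdist W (f y) (f x) < e)"

end

theory Submission
  imports Defs "HOL-Analysis.Analysis"
begin

text \<open>
  A unital homomorphism commutes with \<open>R\<^sub>q\<close>, and a bijective one maps the invertible elements
  exactly onto the invertible elements. If it is moreover a homeomorphism, it maps the boundary of
  the singular set of \<open>V\<close> onto that of \<open>W\<close>, so \<open>B(v) = B(A v)\<close>; and since \<open>A\<close> is injective, the
  union over its kernel is just \<open>B(v)\<close>.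

  Continuity of \<open>A\<^sup>-\<^sup>1\<close> is the bounded inverse theorem for the underlying real Banach spaces.
  By Baire's theorem the closure of the image of some ball has interior, which yields approximate
  preimages of controlled norm; successive approximation in the complete space \<open>V\<close> turns them into
  exact preimages \<open>x\<close> of \<open>y\<close> with \<open>nrm x \<le> K nrm y\<close>, so \<open>A\<^sup>-\<^sup>1\<close> is Lipschitz.
\<close>

lemma qadd_qof_real: "qadd (qof_real r) (qof_real s) = qof_real (r + s)"
  by (simp add: qadd_def qof_real_def)

lemma qmul_qof_real: "qmul (qof_real r) (qof_real s) = qof_real (r * s)"
  by (simp add: qmul_def qof_real_def)

lemma qof_real_1: "qof_real 1 = qone"
  by (simp add: qone_def qof_real_def)

lemma qnorm_qof_real: "qnorm (qof_real r) = \<bar>r\<bar>"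
  by (simp add: qnorm_def qof_real_def)

abbreviation qdiff :: "'a qalg \<Rightarrow> 'a \<Rightarrow> 'a \<Rightarrow> 'a" where
  "qdiff A x y \<equiv> add A x (neg A y)"

abbreviation rscale :: "'a qalg \<Rightarrow> real \<Rightarrow> 'a \<Rightarrow> 'a" where
  "rscale A r x \<equiv> lsc A (qof_real r) x"

primrec partial_sum :: "'a qalg \<Rightarrow> (nat \<Rightarrow> 'a) \<Rightarrow> nat \<Rightarrow> 'a" where
  "partial_sum A x 0 = zero A"
| "partial_sum A x (Suc m) = add A (partial_sum A x m) (x m)"

lemma eventually_divide_pow2_less:
  fixes C \<epsilon> :: real
  assumes "0 < \<epsilon>"
  shows "eventually (\<lambda>n. C / 2 ^ n < \<epsilon>) sequentially"
  using order_tendstoD(2)[OF LIMSEQ_divide_realpow_zero[of 2 C] assms] by simp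

locale qbanach =
  fixes A :: "'a qalg"
  assumes qbanach_alg: "qbanach_alg A"
begin

lemma algebra_axioms:
  "add A (add A x y) z = add A x (add A y z)"
  "add A x y = add A y x"
  "add A x (zero A) = x"
  "add A x (neg A x) = zero A"
  "lsc A (qadd p q) x = add A (lsc A p x) (lsc A q x)"
  "lsc A q (add A x y) = add A (lsc A q x) (lsc A q y)"
  "lsc A (qmul p q) x = lsc A p (lsc A q x)"
  "lsc A qone x = x"
  "nrm A x = 0 \<longleftrightarrow> x = zero A"
  "nrm A (add A x y) \<le> nrm A x + nrm A y"
  "nrm A (lsc A q x) = qnorm q * nrm A x"
  using qbanach_alg unfolding qbanach_alg_def by auto

sublocale grp: comm_monoid "add A" "zero A"
  by unfold_locales (fact algebra_axioms)+

sublocale grp: group "add A" "zero A" "neg A"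
  by unfold_locales (simp, metis grp.commute algebra_axioms(4))

lemma add_neg_cancel_left [simp]: "add A (neg A x) (add A x y) = y"
  by (simp flip: grp.assoc)

lemma nrm_eq_0_iff [simp]: "nrm A x = 0 \<longleftrightarrow> x = zero A"
  by (fact algebra_axioms)

lemma nrm_zero [simp]: "nrm A (zero A) = 0"
  by simp

lemma nrm_triangle: "nrm A (add A x y) \<le> nrm A x + nrm A y"
  by (fact algebra_axioms)

lemma rscale_add: "rscale A (r + s) x = add A (rscale A r x) (rscale A s x)"
  by (simp add: algebra_axioms(5) flip: qadd_qof_real)

lemma rscale_rscale: "rscale A r (rscale A s x) = rscale A (r * s) x"
  by (simp add: algebra_axioms(7) flip: qmul_qof_real)

lemma rscale_one [simp]: "rscale A 1 x = x"
  by (simp add: algebra_axioms(8) qof_real_1)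

lemma nrm_rscale: "nrm A (rscale A r x) = \<bar>r\<bar> * nrm A x"
  by (simp add: algebra_axioms(11) qnorm_qof_real)

lemma rscale_zero [simp]: "rscale A 0 x = zero A"
  using nrm_rscale[of 0 x] by simp

lemma neg_eq_rscale: "neg A x = rscale A (-1) x"
  by (rule grp.inverse_unique) (metis rscale_add rscale_one rscale_zero add.right_inverse)

lemma nrm_neg [simp]: "nrm A (neg A x) = nrm A x"
  by (simp add: neg_eq_rscale nrm_rscale)

lemma nrm_nonneg: "0 \<le> nrm A x"
  using nrm_triangle[of x "neg A x"] by simp

lemma rscale_diff: "rscale A r (qdiff A x y) = qdiff A (rscale A r x) (rscale A r y)"
  by (simp add: algebra_axioms(6) neg_eq_rscale rscale_rscale mult.commute)

lemma rscale_inverse_cancel: "r \<noteq> 0 \<Longrightarrow> rscale A (1 / r) (rscale A r x) = x"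
  by (simp add: rscale_rscale)

sublocale metric: Metric_space UNIV "qdist A"
proof
  fix x y z
  show "0 \<le> qdist A x y"
    by (simp add: qdist_def nrm_nonneg)
  show "qdist A x y = 0 \<longleftrightarrow> x = y"
    by (metis qdist_def nrm_eq_0_iff grp.inverse_unique grp.inverse_inverse grp.right_inverse)
  show "qdist A x y = qdist A y x"
    by (metis qdist_def nrm_neg grp.inverse_distrib_swap grp.inverse_inverse)
  have "qdiff A x z = add A (qdiff A x y) (qdiff A y z)"
    by (simp add: grp.assoc)
  then show "qdist A x z \<le> qdist A x y + qdist A y z"
    by (metis qdist_def nrm_triangle)
qed

lemma qdist_zero_right [simp]: "qdist A x (zero A) = nrm A x"
  by (simp add: qdist_def)

lemma add_diff_cancel_left [simp]: "qdiff A (add A x y) x = y"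
  by (metis grp.assoc grp.commute grp.right_inverse grp.right_neutral)

lemma qdist_add_self [simp]: "qdist A (add A x y) x = nrm A y"
  by (simp add: qdist_def)

lemma qdist_diff_le: "qdist A (qdiff A a b) (qdiff A c d) \<le> qdist A a c + qdist A b d"
proof -
  have "qdiff A (qdiff A a b) (qdiff A c d) = qdiff A (qdiff A a c) (qdiff A b d)"
    by (simp add: grp.inverse_distrib_swap ac_simps)
  then show ?thesis
    by (metis qdist_def nrm_triangle nrm_neg)
qed

lemma qdist_rscale: "qdist A (rscale A r x) (rscale A r y) = \<bar>r\<bar> * qdist A x y"
  by (simp add: qdist_def nrm_rscale flip: rscale_diff)

lemma mcomplete: metric.mcomplete
proof -
  have "\<forall>s :: nat \<Rightarrow> 'a. (\<forall>e>0. \<exists>N. \<forall>m\<ge>N. \<forall>n\<ge>N. qdist A (s m) (s n) < e) \<longrightarrow>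
          (\<exists>l. \<forall>e>0. \<exists>N. \<forall>n\<ge>N. qdist A (s n) l < e)"
    using qbanach_alg unfolding qbanach_alg_def by blast
  then show ?thesis
    unfolding metric.mcomplete_def metric.MCauchy_def metric.limitin_metric eventually_sequentially
    by auto
qed

lemma qcontinuous_if_Lipschitz:
  assumes "\<And>x y. qdist B (f x) (f y) \<le> K * qdist A x y"
  shows "qcontinuous A B f"
  unfolding qcontinuous_def
proof (intro allI impI)
  fix y and \<epsilon> :: real
  assume "0 < \<epsilon>"
  have "qdist B (f z) (f y) < \<epsilon>" if "qdist A z y < \<epsilon> / (\<bar>K\<bar> + 1)" for z
  proof -
    have "qdist B (f z) (f y) \<le> (\<bar>K\<bar> + 1) * qdist A z y"
      by (intro order_trans[OF assms] mult_right_mono) auto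
    also have "\<dots> < \<epsilon>"
      using that by (simp add: pos_less_divide_eq mult.commute)
    finally show ?thesis .
  qed
  then show "\<exists>\<delta>>0. \<forall>z. qdist A z y < \<delta> \<longrightarrow> qdist B (f z) (f y) < \<epsilon>"
    using \<open>0 < \<epsilon>\<close> by (intro exI[of _ "\<epsilon> / (\<bar>K\<bar> + 1)"]) auto
qed

lemma partial_sum_dist_le:
  assumes x: "\<And>k. nrm A (x k) \<le> C / 2 ^ k" and "n \<le> m"
  shows "qdist A (partial_sum A x m) (partial_sum A x n) \<le> 2 * C * (1 / 2 ^ n - 1 / 2 ^ m)"
  using \<open>n \<le> m\<close>
proof (induction m rule: dec_induct)
  case base
  then show ?case by simp
next
  case (step k)
  have "qdist A (partial_sum A x (Suc k)) (partial_sum A x n)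
      \<le> qdist A (partial_sum A x (Suc k)) (partial_sum A x k) + qdist A (partial_sum A x k) (partial_sum A x n)"
    by (rule metric.triangle) simp_all
  also have "\<dots> \<le> C / 2 ^ k + 2 * C * (1 / 2 ^ n - 1 / 2 ^ k)"
    using x[of k] step.IH by simp
  also have "\<dots> = 2 * C * (1 / 2 ^ n - 1 / 2 ^ Suc k)"
    by (simp add: field_simps)
  finally show ?case .
qed

lemma geometric_series_converges:
  assumes x: "\<And>k. nrm A (x k) \<le> C / 2 ^ k"
  obtains l where "limitin metric.mtopology (partial_sum A x) l sequentially" "nrm A l \<le> 2 * C"
proof -
  have "0 \<le> C"
    using x[of 0] nrm_nonneg[of "x 0"] by simp
  have dist_le: "qdist A (partial_sum A x m) (partial_sum A x n) \<le> 2 * C / 2 ^ n" if "n \<le> m" for m n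
  proof -
    have "2 * C * (1 / 2 ^ n - 1 / 2 ^ m) \<le> 2 * C * (1 / 2 ^ n)"
      using \<open>0 \<le> C\<close> by (intro mult_left_mono) auto
    then show ?thesis
      using partial_sum_dist_le[OF x that] by simp
  qed
  have "metric.MCauchy (partial_sum A x)"
    unfolding metric.MCauchy_def
  proof (intro conjI allI impI)
    fix \<epsilon> :: real
    assume "\<epsilon> > 0"
    then obtain N where N: "2 * C / 2 ^ N < \<epsilon>"
      using eventually_divide_pow2_less[of \<epsilon> "2 * C"] eventually_sequentially by auto
    have "qdist A (partial_sum A x m) (partial_sum A x n) < \<epsilon>" if "N \<le> n" "n \<le> m" for m n
    proof -
      have "2 * C / 2 ^ n \<le> 2 * C / 2 ^ N"
        using \<open>0 \<le> C\<close> that by (intro divide_left_mono) (auto intro: power_increasing)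
      then show ?thesis
        using dist_le[OF \<open>n \<le> m\<close>] N by linarith
    qed
    then show "\<exists>N. \<forall>n n'. N \<le> n \<longrightarrow> N \<le> n' \<longrightarrow> qdist A (partial_sum A x n) (partial_sum A x n') < \<epsilon>"
      by (metis metric.commute UNIV_I nle_le)
  qed simp
  then obtain l where l: "limitin metric.mtopology (partial_sum A x) l sequentially"
    using mcomplete unfolding metric.mcomplete_def by blast
  have "partial_sum A x m \<in> metric.mcball (zero A) (2 * C)" for m
    using dist_le[of 0 m] by (simp add: metric.commute[of "zero A"])
  then have "l \<in> metric.mcball (zero A) (2 * C)"
    by (intro limitin_closedin[OF l]) auto
  then show ?thesis
    using l that by (simp add: metric.commute[of "zero A"])
qed

end

locale qbanach_pair = V: qbanach V + W: qbanach W
  for V :: "'v qalg" and W :: "'w qalg"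
begin

lemma limitin_qcontinuous:
  assumes "qcontinuous V W f" "limitin V.metric.mtopology s l F"
  shows "limitin W.metric.mtopology (\<lambda>n. f (s n)) (f l) F"
  unfolding W.metric.limitin_metric
proof (intro conjI allI impI UNIV_I)
  fix \<epsilon> :: real
  assume "\<epsilon> > 0"
  then obtain \<delta> where "\<delta> > 0" "\<And>y. qdist V y l < \<delta> \<Longrightarrow> qdist W (f y) (f l) < \<epsilon>"
    using assms(1) unfolding qcontinuous_def by blast
  moreover have "eventually (\<lambda>n. qdist V (s n) l < \<delta>) F"
    using assms(2) \<open>\<delta> > 0\<close> unfolding V.metric.limitin_metric by simp
  ultimately show "eventually (\<lambda>n. f (s n) \<in> UNIV \<and> qdist W (f (s n)) (f l) < \<epsilon>) F"
    by (auto elim: eventually_mono)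
qed

lemma ball_in_closure_image_ball:
  assumes "surj f"
  obtains n y0 r where "r > 0"
    "W.metric.mball y0 r \<subseteq> W.metric.mtopology closure_of (f ` {x. nrm V x \<le> real n})"
proof -
  define F where "F n = W.metric.mtopology closure_of (f ` {x. nrm V x \<le> real n})" for n :: nat
  have "y \<in> F (nat \<lceil>nrm V v\<rceil>)" if "y = f v" for v y
  proof -
    have "y \<in> f ` {x. nrm V x \<le> real (nat \<lceil>nrm V v\<rceil>)}"
      using that by (simp add: real_nat_ceiling_ge)
    then show ?thesis
      unfolding F_def by (metis W.metric.topspace_mtopology closure_of_subset subset_UNIV subsetD)
  qed
  then have "\<Union> (range F) = UNIV"
    using assms by (metis UNIV_eq_I UN_I rangeI surjD)
  then have "W.metric.mtopology interior_of \<Union> (range F) \<noteq> {}"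
    by (metis W.metric.topspace_mtopology interior_of_topspace UNIV_not_empty)
  moreover have "closedin W.metric.mtopology (F n)" for n
    by (simp add: F_def)
  ultimately obtain n where "W.metric.mtopology interior_of F n \<noteq> {}"
    using W.metric.metric_Baire_category_alt[OF W.mcomplete, of "range F"] by auto
  then obtain y0 r where "r > 0" "W.metric.mball y0 r \<subseteq> F n"
    using W.metric.in_interior_of_mball by blast
  then show ?thesis
    using that unfolding F_def by blast
qed

end

locale qbanach_linear = qbanach_pair V W
  for V :: "'v qalg" and W :: "'w qalg" +
  fixes T :: "'v \<Rightarrow> 'w"
  assumes map_add: "T (add V x y) = add W (T x) (T y)"
    and map_rscale: "T (rscale V r x) = rscale W r (T x)"
begin

lemma map_zero [simp]: "T (zero V) = zero W"
  by (metis V.rscale_zero W.rscale_zero map_rscale)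

lemma map_neg: "T (neg V x) = neg W (T x)"
  by (metis V.neg_eq_rscale W.neg_eq_rscale map_rscale)

lemma map_diff: "T (qdiff V x y) = qdiff W (T x) (T y)"
  by (simp add: map_add map_neg)

lemma approximate_small_preimages:
  assumes "surj T"
  obtains N R where "0 \<le> N" "0 < R"
    "\<And>y \<epsilon>. nrm W y < R \<Longrightarrow> 0 < \<epsilon> \<Longrightarrow> \<exists>x. nrm V x \<le> N \<and> qdist W (T x) y < \<epsilon>"
proof -
  obtain n y0 r where "r > 0"
    and ball: "W.metric.mball y0 r \<subseteq> W.metric.mtopology closure_of (T ` {x. nrm V x \<le> real n})"
    by (rule ball_in_closure_image_ball[OF assms])
  have near: "\<exists>x. nrm V x \<le> real n \<and> qdist W (T x) z < \<epsilon>"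
    if z: "qdist W z y0 < r" and "0 < \<epsilon>" for z \<epsilon>
  proof -
    have "z \<in> W.metric.mball y0 r"
      using z by (simp add: W.metric.commute)
    then obtain w where "w \<in> T ` {x. nrm V x \<le> real n}" "w \<in> W.metric.mball z \<epsilon>"
      using ball \<open>0 < \<epsilon>\<close> unfolding W.metric.metric_closure_of by blast
    then show ?thesis
      by (auto simp: W.metric.commute)
  qed
  have "\<exists>x. nrm V x \<le> 2 * real n \<and> qdist W (T x) y < \<epsilon>"
    if y: "nrm W y < r" and "0 < \<epsilon>" for y \<epsilon>
  proof -
    \<comment> \<open>approximate both \<open>y0\<close> and \<open>y0 + y\<close>, and subtract\<close>
    obtain x0 where x0: "nrm V x0 \<le> real n" "qdist W (T x0) y0 < \<epsilon> / 2"
      using near[of y0 "\<epsilon> / 2"] \<open>r > 0\<close> \<open>0 < \<epsilon>\<close> by auto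
    obtain x1 where x1: "nrm V x1 \<le> real n" "qdist W (T x1) (add W y0 y) < \<epsilon> / 2"
      using near[of "add W y0 y" "\<epsilon> / 2"] y \<open>0 < \<epsilon>\<close> by auto
    have "nrm V (qdiff V x1 x0) \<le> 2 * real n"
      using V.nrm_triangle[of x1 "neg V x0"] x0(1) x1(1) by simp
    moreover have "qdist W (T (qdiff V x1 x0)) y < \<epsilon>"
      using W.qdist_diff_le[of "T x1" "T x0" "add W y0 y" y0] x0(2) x1(2) by (simp add: map_diff)
    ultimately show ?thesis
      by blast
  qed
  then show ?thesis
    using that[of "2 * real n" r] \<open>r > 0\<close> by simp
qed

lemma halving_preimages:
  assumes "surj T"
  obtains K where "0 \<le> K" "\<And>y. \<exists>x. nrm V x \<le> K * nrm W y \<and> qdist W (T x) y \<le> nrm W y / 2"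
proof -
  obtain N R where "0 \<le> N" "0 < R"
    and small: "\<And>y \<epsilon>. nrm W y < R \<Longrightarrow> 0 < \<epsilon> \<Longrightarrow> \<exists>x. nrm V x \<le> N \<and> qdist W (T x) y < \<epsilon>"
    using approximate_small_preimages[OF assms] by blast
  define K where "K = 2 * N / R"
  have "\<exists>x. nrm V x \<le> K * nrm W y \<and> qdist W (T x) y \<le> nrm W y / 2" for y
  proof (cases "y = zero W")
    case True
    then show ?thesis
      by (intro exI[of _ "zero V"]) simp
  next
    case False
    define s where "s = R / (2 * nrm W y)"
    have "0 < nrm W y"
      using False W.nrm_nonneg[of y] by (simp add: order_less_le)
    then have "0 < s" "nrm W (rscale W s y) < R"
      using \<open>0 < R\<close> by (simp_all add: s_def W.nrm_rscale)
    then obtain x where x: "nrm V x \<le> N" "qdist W (T x) (rscale W s y) < s * nrm W y / 2"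
      using small[of "rscale W s y" "s * nrm W y / 2"] \<open>0 < nrm W y\<close> by auto
    have "nrm V (rscale V (1 / s) x) \<le> K * nrm W y"
      using x(1) \<open>0 < s\<close> \<open>0 < nrm W y\<close> \<open>0 < R\<close>
      by (simp add: V.nrm_rscale K_def s_def field_simps)
    moreover have "qdist W (T (rscale V (1 / s) x)) y < nrm W y / 2"
    proof -
      have "qdist W (T (rscale V (1 / s) x)) y = qdist W (T x) (rscale W s y) / s"
        using \<open>0 < s\<close> W.qdist_rscale[of "1 / s" "T x" "rscale W s y"]
        by (simp add: map_rscale W.rscale_inverse_cancel)
      also have "\<dots> < (s * nrm W y / 2) / s"
        using x(2) \<open>0 < s\<close> by (rule divide_strict_right_mono)
      also have "\<dots> = nrm W y / 2"
        using \<open>0 < s\<close> by simp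
      finally show ?thesis .
    qed
    ultimately show ?thesis
      by (blast intro: less_imp_le)
  qed
  moreover have "0 \<le> K"
    using \<open>0 \<le> N\<close> \<open>0 < R\<close> by (simp add: K_def)
  ultimately show ?thesis
    using that by blast
qed

lemma exact_preimages:
  assumes "surj T" "qcontinuous V W T"
  obtains K where "\<And>y. \<exists>x. T x = y \<and> nrm V x \<le> K * nrm W y"
proof -
  obtain K where "0 \<le> K" and "\<And>y. \<exists>x. nrm V x \<le> K * nrm W y \<and> qdist W (T x) y \<le> nrm W y / 2"
    using halving_preimages[OF assms(1)] by blast
  then obtain h where h_nrm: "\<And>y. nrm V (h y) \<le> K * nrm W y"
    and h_dist: "\<And>y. qdist W (T (h y)) y \<le> nrm W y / 2"
    by metis
  have "\<exists>x. T x = y \<and> nrm V x \<le> 2 * K * nrm W y" for y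
  proof -
    \<comment> \<open>\<open>r k\<close> is the residual after \<open>k\<close> corrections by \<open>h\<close>; the corrections sum to a preimage of \<open>y\<close>.\<close>
    define r where "r k = ((\<lambda>z. qdiff W z (T (h z))) ^^ k) y" for k
    have r_Suc: "r (Suc k) = qdiff W (r k) (T (h (r k)))" for k
      by (simp add: r_def)
    have r_le: "nrm W (r k) \<le> nrm W y / 2 ^ k" for k
    proof (induction k)
      case 0
      then show ?case by (simp add: r_def)
    next
      case (Suc k)
      have "nrm W (r (Suc k)) = qdist W (r k) (T (h (r k)))"
        by (simp add: r_Suc qdist_def)
      also have "\<dots> \<le> nrm W (r k) / 2"
        using h_dist by (simp add: W.metric.commute)
      also have "\<dots> \<le> nrm W y / 2 ^ Suc k"
        using Suc.IH by simp
      finally show ?case .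
    qed
    define x where "x k = h (r k)" for k
    have x_le: "nrm V (x k) \<le> K * nrm W y / 2 ^ k" for k
      using h_nrm[of "r k"] mult_left_mono[OF r_le[of k] \<open>0 \<le> K\<close>] by (simp add: x_def)
    have T_partial_sum: "T (partial_sum V x m) = qdiff W y (r m)" for m
    proof (induction m)
      case 0
      then show ?case by (simp add: r_def)
    next
      case (Suc m)
      then show ?case
        by (simp add: map_add r_Suc x_def W.grp.inverse_distrib_swap ac_simps)
    qed
    obtain l where l: "limitin V.metric.mtopology (partial_sum V x) l sequentially"
      and "nrm V l \<le> 2 * (K * nrm W y)"
      by (rule V.geometric_series_converges[OF x_le])
    have "limitin W.metric.mtopology (\<lambda>m. T (partial_sum V x m)) (T l) sequentially"
      by (rule limitin_qcontinuous[OF assms(2) l])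
    moreover have "limitin W.metric.mtopology (\<lambda>m. T (partial_sum V x m)) y sequentially"
      unfolding W.metric.limitin_metric T_partial_sum
    proof (intro conjI allI impI UNIV_I)
      fix \<epsilon> :: real
      assume "0 < \<epsilon>"
      then show "eventually (\<lambda>m. qdiff W y (r m) \<in> UNIV \<and> qdist W (qdiff W y (r m)) y < \<epsilon>) sequentially"
        using eventually_divide_pow2_less[of \<epsilon> "nrm W y"]
        by (auto elim!: eventually_mono intro: le_less_trans r_le)
    qed
    ultimately have "T l = y"
      by (rule W.metric.limitin_metric_unique) simp
    then show ?thesis
      using \<open>nrm V l \<le> 2 * (K * nrm W y)\<close> by auto
  qed
  then show ?thesis
    using that by blast
qed

lemma qcontinuous_inv:
  assumes "bij T" "qcontinuous V W T"
  shows "qcontinuous W V (inv T)"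
proof -
  obtain K where K: "\<And>y. \<exists>x. T x = y \<and> nrm V x \<le> K * nrm W y"
    using exact_preimages[OF bij_is_surj[OF assms(1)] assms(2)] by blast
  have "qdist V (inv T y) (inv T z) \<le> K * qdist W y z" for y z
  proof -
    obtain x where x: "T x = qdiff W y z" "nrm V x \<le> K * qdist W y z"
      using K[of "qdiff W y z"] by (auto simp: qdist_def)
    have "T (qdiff V (inv T y) (inv T z)) = qdiff W y z"
      using assms(1) by (simp add: map_diff bij_is_surj surj_f_inv_f)
    then have "x = qdiff V (inv T y) (inv T z)"
      using x(1) assms(1) by (metis bij_is_inj injD)
    then show ?thesis
      using x(2) by (simp add: qdist_def)
  qed
  then show ?thesis
    by (rule W.qcontinuous_if_Lipschitz)
qed

end

lemma map_qboundary:
  assumes "qcontinuous A B f" "\<And>y. y \<in> S \<longleftrightarrow> f y \<in> S'" "x \<in> qboundary A S"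
  shows "f x \<in> qboundary B S'"
  unfolding qboundary_def
proof (intro CollectI allI impI conjI)
  fix \<epsilon> :: real
  assume "0 < \<epsilon>"
  then obtain \<delta> where "0 < \<delta>" and \<delta>: "\<And>y. qdist A y x < \<delta> \<Longrightarrow> qdist B (f y) (f x) < \<epsilon>"
    using assms(1) unfolding qcontinuous_def by blast
  then obtain y1 y2 where "y1 \<in> S" "qdist A y1 x < \<delta>" "y2 \<notin> S" "qdist A y2 x < \<delta>"
    using assms(3) unfolding qboundary_def by blast
  then show "\<exists>y\<in>S'. qdist B y (f x) < \<epsilon>" "\<exists>y. y \<notin> S' \<and> qdist B y (f x) < \<epsilon>"
    using \<delta> assms(2) by blast+
qed

locale qbanach_iso = qbanach_pair V W
  for V :: "'v qalg" and W :: "'w qalg" +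
  fixes T :: "'v \<Rightarrow> 'w"
  assumes iso: "qiso V W T" and continuous: "qcontinuous V W T"

sublocale qbanach_iso \<subseteq> qbanach_linear V W T
  using iso by unfold_locales (simp_all add: qiso_def qhom_def)

context qbanach_iso
begin

lemma bij: "bij T"
  using iso by (simp add: qiso_def)

lemma map_mul: "T (mul V x y) = mul W (T x) (T y)"
  using iso by (simp add: qiso_def qhom_def)

lemma map_one: "T (one V) = one W"
  using iso by (simp add: qiso_def qhom_def)

lemma map_lsc: "T (lsc V q x) = lsc W q (T x)"
  using iso by (simp add: qiso_def qhom_def)

lemma map_qinvertibles_iff: "T x \<in> qinvertibles W \<longleftrightarrow> x \<in> qinvertibles V"
proof -
  have ex_image: "(\<exists>w. P w) \<longleftrightarrow> (\<exists>y. P (T y))" for P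
    using bij by (metis bij_pointE)
  show ?thesis
    unfolding qinvertibles_def mem_Collect_eq ex_image
    by (simp flip: map_mul map_one add: inj_eq[OF bij_is_inj[OF bij]])
qed

lemma map_qRq: "T (qRq V q v) = qRq W q (T v)"
  by (simp add: qRq_def map_add map_neg map_mul map_one map_lsc)

lemma map_qboundary_singular_iff:
  "T x \<in> qboundary W (UNIV - qinvertibles W) \<longleftrightarrow> x \<in> qboundary V (UNIV - qinvertibles V)"
proof
  have T_inv: "T (inv T z) = z" for z
    using bij by (simp add: bij_is_surj surj_f_inv_f)
  assume "T x \<in> qboundary W (UNIV - qinvertibles W)"
  then have "inv T (T x) \<in> qboundary V (UNIV - qinvertibles V)"
    using map_qinvertibles_iff[of "inv T _"]
    by (intro map_qboundary[OF qcontinuous_inv[OF bij continuous]]) (simp_all add: T_inv)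
  then show "x \<in> qboundary V (UNIV - qinvertibles V)"
    using bij by (simp add: bij_is_inj)
next
  assume "x \<in> qboundary V (UNIV - qinvertibles V)"
  then show "T x \<in> qboundary W (UNIV - qinvertibles W)"
    by (intro map_qboundary[OF continuous]) (simp_all add: map_qinvertibles_iff)
qed

lemma BSd_map: "BSd W (T v) = BSd V v"
  by (simp add: BSd_def map_qboundary_singular_iff flip: map_qRq)

lemma kernel_trivial: "{c. T c = zero W} = {zero V}"
  using inj_eq[OF bij_is_inj[OF bij], of _ "zero V"] by auto

end

theorem mainTheorem8:
  fixes V :: "'v qalg" and W :: "'w qalg" and A :: "'v \<Rightarrow> 'w"
  assumes "qbanach_alg V" and "qbanach_alg W"
    and "qiso V W A" and "qcontinuous V W A"
  shows "\<forall>v. BSd V v = BSd W (A v) \<and>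
             BSd W (A v) = (\<Union>c\<in>{c. A c = zero W}. BSd V (add V v c))"
proof -
  interpret qbanach_iso V W A
    using assms by (simp add: qbanach_iso_def qbanach_iso_axioms_def qbanach_pair_def qbanach_def)
  show ?thesis
    by (simp add: BSd_map kernel_trivial)
qed

end
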